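(* Let $\mathbb{A}$ be a finite subset of a Euclidean space $\mathbb{R}^n$, and let $\mathbb{A}^{\mathcal B}$ be the set of minimal combinations of $\mathbb{A}$. If $\beta \in \mathbb{A}^{\mathcal B}$ and $\beta \notin \mathbb{A}$, then there exists an affinely independent subset $S \subset \mathbb{A}$ with $\sharp(S) \geq 2$ such that $\beta$ is the nearest point from the origin $0$ to the convex polytope $\mathcal{C}(S)$ generated by $S$, and $\beta$ lies in the relative interior of $\mathcal{C}(S)$.
   Context: For a finite nonempty set $S \subset \mathbb{R}^n$, $\mathcal{C}(S)$ denotes its convex hull, and $\tau(S)$ denotes the unique point of $\mathcal{C}(S)$ of minimal Euclidean norm (the nearest point of $\mathcal{C}(S)$ to the origin). The set of minimal combinations of a finite set $\mathbb{A}$ is $\mathbb{A}^{\mathcal B} = \{\tau(S) : S \subset \mathbb{A},\ S \neq \varnothing\}$. $\sharp(S)$ denotes the cardinality of $S$. For an affinely independent set $S = \{x_1,\dots,x_s\}$, the relative interior of $\mathcal{C}(S)$ is $\{\sum_{i=1}^s \lambda_i x_i : \sum_i \lambda_i = 1,\ \lambda_1,\dots,\lambda_s > 0\}$. *)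

theory Defs
  imports "HOL-Analysis.Analysis"
begin

definition tau :: "'a::euclidean_space set \<Rightarrow> 'a" where
  "tau S = closest_point (convex hull S) 0"

definition minimal_combinations :: "'a::euclidean_space set \<Rightarrow> 'a set" where
  "minimal_combinations A = {tau S | S. S \<subseteq> A \<and> S \<noteq> {}}"

end

theory Submission
  imports Defs
begin

text \<open>Shrink the carrier of \<beta> = tau T to an inclusion-minimal S \<subseteq> T with
  \<beta> \<in> conv S. By Caratheodory S then has at most aff_dim S + 1 points, so it is
  affinely independent, and no barycentric coordinate of \<beta> can vanish, since the
  corresponding point could be dropped. As conv S \<subseteq> conv T, the point of conv T
  nearest to 0 is also the point of conv S nearest to 0. Finally S is no singleton
  because \<beta> \<notin> A.\<close>

definition minimal_convex_support :: "'a::real_vector \<Rightarrow> 'a set \<Rightarrow> bool" where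
  "minimal_convex_support x S \<longleftrightarrow>
     x \<in> convex hull S \<and> (\<forall>S'. S' \<subset> S \<longrightarrow> x \<notin> convex hull S')"

lemma exists_minimal_convex_support:
  assumes "finite T" "x \<in> convex hull T"
  shows "\<exists>S\<subseteq>T. minimal_convex_support x S"
  using assms
proof (induction rule: finite_psubset_induct)
  case (psubset T)
  show ?case
  proof (cases "\<exists>T'. T' \<subset> T \<and> x \<in> convex hull T'")
    case True
    then obtain T' where "T' \<subset> T" "x \<in> convex hull T'" by blast
    with psubset.IH obtain S where "S \<subseteq> T'" "minimal_convex_support x S" by blast
    with \<open>T' \<subset> T\<close> show ?thesis by auto
  next
    case False
    with psubset.prems have "minimal_convex_support x T"
      unfolding minimal_convex_support_def by blast
    then show ?thesis by blast
  qed
qed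

lemma minimal_convex_support_affine_independent:
  fixes S :: "'a::euclidean_space set"
  assumes "finite S" "minimal_convex_support x S"
  shows "\<not> affine_dependent S"
proof -
  obtain S' u where S': "S' \<subseteq> S" "card S' \<le> aff_dim S + 1"
      "\<forall>y\<in>S'. 0 \<le> u y" "sum u S' = 1" "(\<Sum>y\<in>S'. u y *\<^sub>R y) = x" "finite S'"
    using assms(2) unfolding minimal_convex_support_def convex_hull_caratheodory_aff_dim
    by blast
  have "x \<in> convex hull S'"
    using S' by (auto simp: convex_hull_finite)
  with assms(2) S'(1) have "S' = S"
    unfolding minimal_convex_support_def by blast
  with S'(2) have "int (card S) \<le> aff_dim S + 1"
    by simp
  with aff_dim_le_card[OF assms(1)] have "aff_dim S = int (card S) - 1"
    by linarith
  with assms(1) show ?thesis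
    by (simp add: affine_independent_iff_card)
qed

lemma minimal_convex_support_positive_coefficients:
  assumes "finite S" "minimal_convex_support x S"
  shows "\<exists>u. (\<forall>y\<in>S. u y > 0) \<and> sum u S = 1 \<and> (\<Sum>y\<in>S. u y *\<^sub>R y) = x"
proof -
  obtain u where u: "\<forall>y\<in>S. 0 \<le> u y" "sum u S = 1" "(\<Sum>y\<in>S. u y *\<^sub>R y) = x"
    using assms unfolding minimal_convex_support_def by (auto simp: convex_hull_finite)
  have "u a > 0" if "a \<in> S" for a
  proof (rule ccontr)
    assume "\<not> u a > 0"
    with u(1) that have "u a = 0" by force
    with u that assms(1) have "sum u (S - {a}) = 1" "(\<Sum>y\<in>S - {a}. u y *\<^sub>R y) = x"
      by (simp_all add: sum.remove)
    with u(1) assms(1) have "x \<in> convex hull (S - {a})"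
      by (auto simp: convex_hull_finite)
    with assms(2) that show False
      unfolding minimal_convex_support_def by blast
  qed
  with u show ?thesis by blast
qed

lemma minimal_convex_support_card_ge_2:
  assumes "finite S" "minimal_convex_support x S" "x \<notin> S"
  shows "card S \<ge> 2"
proof (rule ccontr)
  assume "\<not> card S \<ge> 2"
  moreover have "S \<noteq> {}"
    using assms(2) unfolding minimal_convex_support_def by auto
  with assms(1) have "card S \<noteq> 0" by simp
  ultimately have "card S = 1" by arith
  then obtain y where "S = {y}" by (rule card_1_singletonE)
  with assms(2,3) show False
    unfolding minimal_convex_support_def by simp
qed

lemma closest_point_subset_eq:
  assumes "convex S" "closed S" "closed T" "S \<subseteq> T" "closest_point T a \<in> S"
  shows "closest_point S a = closest_point T a"
proof -
  have "\<forall>z\<in>S. dist a (closest_point T a) \<le> dist a z"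
    using assms(4) closest_point_le[OF assms(3)] by blast
  then show ?thesis
    using closest_point_unique[OF assms(1,2,5)] by simp
qed

lemma closed_convex_hull_finite:
  fixes S :: "'a::real_normed_vector set"
  shows "finite S \<Longrightarrow> closed (convex hull S)"
  by (intro compact_imp_closed finite_imp_compact_convex_hull)

lemma tau_in_convex_hull:
  fixes T :: "'a::euclidean_space set"
  assumes "finite T" "T \<noteq> {}"
  shows "tau T \<in> convex hull T"
  unfolding tau_def
  using assms by (intro closest_point_in_set closed_convex_hull_finite) simp_all

lemma tau_subset_eq:
  fixes T :: "'a::euclidean_space set"
  assumes "finite T" "S \<subseteq> T" "tau T \<in> convex hull S"
  shows "tau S = tau T"
  unfolding tau_def
proof (rule closest_point_subset_eq)
  have "finite S" using assms(1,2) by (rule finite_subset[rotated])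
  then show "closed (convex hull S)" by (rule closed_convex_hull_finite)
  show "closed (convex hull T)" using assms(1) by (rule closed_convex_hull_finite)
  show "convex hull S \<subseteq> convex hull T" using assms(2) by (rule hull_mono)
  show "closest_point (convex hull T) 0 \<in> convex hull S"
    using assms(3) by (simp add: tau_def)
qed simp

theorem theorem1:
  fixes A :: "'a::euclidean_space set" and \<beta> :: 'a
  assumes "finite A"
    and "\<beta> \<in> minimal_combinations A"
    and "\<beta> \<notin> A"
  shows "\<exists>S. S \<subseteq> A \<and> \<not> affine_dependent S \<and> card S \<ge> 2
            \<and> \<beta> = tau S
            \<and> (\<exists>u. (\<forall>x\<in>S. u x > 0) \<and> sum u S = 1 \<and> (\<Sum>x\<in>S. u x *\<^sub>R x) = \<beta>)"
proof -
  obtain T where T: "T \<subseteq> A" "T \<noteq> {}" "\<beta> = tau T"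
    using assms(2) unfolding minimal_combinations_def by auto
  have "finite T" using assms(1) T(1) by (rule finite_subset[rotated])
  with T have "\<beta> \<in> convex hull T" by (simp add: tau_in_convex_hull)
  with \<open>finite T\<close> obtain S where S: "S \<subseteq> T" "minimal_convex_support \<beta> S"
    using exists_minimal_convex_support by blast
  have "finite S" using \<open>finite T\<close> S(1) by (rule finite_subset[rotated])
  have "S \<subseteq> A" using S(1) T(1) by (rule order_trans)
  have "\<beta> = tau S"
    using tau_subset_eq[OF \<open>finite T\<close> S(1)] S(2) T(3)
    unfolding minimal_convex_support_def by metis
  have "\<beta> \<notin> S" using \<open>S \<subseteq> A\<close> assms(3) by blast
  have "card S \<ge> 2"
    using \<open>finite S\<close> S(2) \<open>\<beta> \<notin> S\<close> by (rule minimal_convex_support_card_ge_2)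
  have "\<not> affine_dependent S"
    using \<open>finite S\<close> S(2) by (rule minimal_convex_support_affine_independent)
  obtain u where "\<forall>x\<in>S. u x > 0" "sum u S = 1" "(\<Sum>x\<in>S. u x *\<^sub>R x) = \<beta>"
    using minimal_convex_support_positive_coefficients[OF \<open>finite S\<close> S(2)] by blast
  with \<open>S \<subseteq> A\<close> \<open>\<not> affine_dependent S\<close> \<open>card S \<ge> 2\<close> \<open>\<beta> = tau S\<close> show ?thesis
    by (intro exI[of _ S] exI[of _ u] conjI)
qed

end
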